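(* Let $\Gamma$ be a metrized graph and let $p,q,s,t,u\in\Gamma$ with $p\neq q$. Then $$j_u(t,s)=j_u^{\Gamma_{pq}}(t,s)+\frac{\big(j_p(q,t)-j_p(q,u)\big)^2+\big(j_p(q,s)-j_p(q,u)\big)^2-\big(j_p(q,t)-j_p(q,s)\big)^2}{2r(p,q)}$$ $$=j_u^{\Gamma_{pq}}(t,s)+\frac{1}{r(p,q)}\big(j_p(q,u)-j_p(q,t)\big)\big(j_p(q,u)-j_p(q,s)\big).$$
   Context: A metrized graph $\Gamma$ is a finite connected graph (multiple edges and self-loops allowed) in which each edge is identified with a closed line segment of positive length. $\Gamma$ is regarded as a resistive electric circuit in which each edge is a resistor whose resistance equals its length. $r(x,y)$ is the effective resistance between $x$ and $y$; $j_z(x,y)$ is the voltage at $x$ when a unit current enters at $y$ and exits at $z$, with reference voltage $0$ at $z$. $\Gamma_{pq}$ is the metrized graph obtained from $\Gamma$ by identifying $p$ and $q$, and $j^{\Gamma_{pq}}$ is its voltage function. *)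

theory Defs
  imports "HOL-Analysis.Analysis"
begin

text \<open>A metrized graph is given by a combinatorial model: a finite connected multigraph
(self-loops and multiple edges allowed) whose edges carry positive lengths.  Each edge e is
identified with the segment [0, len e], position 0 being src e and position len e being tgt e.\<close>

record ('v, 'e) mgraph =
  verts :: "'v set"
  edges :: "'e set"
  src   :: "'e \<Rightarrow> 'v"
  tgt   :: "'e \<Rightarrow> 'v"
  len   :: "'e \<Rightarrow> real"

definition adj :: "('v, 'e) mgraph \<Rightarrow> ('v \<times> 'v) set" where
  "adj G = {(src G e, tgt G e) | e. e \<in> edges G} \<union> {(tgt G e, src G e) | e. e \<in> edges G}"

definition metrized_graph :: "('v, 'e) mgraph \<Rightarrow> bool" where
  "metrized_graph G \<longleftrightarrow>
     finite (verts G) \<and> verts G \<noteq> {} \<and> finite (edges G) \<and>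
     (\<forall>e\<in>edges G. src G e \<in> verts G \<and> tgt G e \<in> verts G \<and> len G e > 0) \<and>
     (\<forall>v\<in>verts G. \<forall>w\<in>verts G. (v, w) \<in> (adj G)\<^sup>*)"

datatype ('v, 'e) point = Vert 'v | Inner 'e real

definition points :: "('v, 'e) mgraph \<Rightarrow> ('v, 'e) point set" where
  "points G = Vert ` verts G \<union> {Inner e t | e t. e \<in> edges G \<and> 0 < t \<and> t < len G e}"

definition pt :: "('v, 'e) mgraph \<Rightarrow> 'e \<Rightarrow> real \<Rightarrow> ('v, 'e) point" where
  "pt G e t = (if t = 0 then Vert (src G e) else if t = len G e then Vert (tgt G e) else Inner e t)"

definition rslope :: "('v, 'e) mgraph \<Rightarrow> (('v, 'e) point \<Rightarrow> real) \<Rightarrow> 'e \<Rightarrow> real \<Rightarrow> real" where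
  "rslope G f e t = (THE D. ((\<lambda>s. f (pt G e s)) has_real_derivative D) (at t within {t..len G e}))"

definition lslope :: "('v, 'e) mgraph \<Rightarrow> (('v, 'e) point \<Rightarrow> real) \<Rightarrow> 'e \<Rightarrow> real \<Rightarrow> real" where
  "lslope G f e t = (THE D. ((\<lambda>s. f (pt G e s)) has_real_derivative D) (at t within {0..t}))"

fun outslope :: "('v, 'e) mgraph \<Rightarrow> (('v, 'e) point \<Rightarrow> real) \<Rightarrow> ('v, 'e) point \<Rightarrow> real" where
  "outslope G f (Vert v) =
     (\<Sum>e\<in>{e\<in>edges G. src G e = v}. rslope G f e 0) +
     (\<Sum>e\<in>{e\<in>edges G. tgt G e = v}. - lslope G f e (len G e))"
| "outslope G f (Inner e t) = rslope G f e t - lslope G f e t"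

text \<open>The metrized graph obtained by identifying all points of the set A to a single point
(A = {} gives the graph itself; A = {p,q} gives \<Gamma>_pq).  Its points are the classes
cls A w.\<close>
definition cls :: "('v, 'e) point set \<Rightarrow> ('v, 'e) point \<Rightarrow> ('v, 'e) point set" where
  "cls A w = (if w \<in> A then A else {w})"

text \<open>f is a voltage function (potential) on \<Gamma> with the points of A identified, for a unit
current entering at y and exiting at z: f is continuous along every edge, piecewise linear
with possible breaks only at y, z and the identified points, constant on identified classes,
and satisfies Kirchhoff's law: at each point (class) the sum of outgoing slopes equals
-1 at the entry point, +1 at the exit point and 0 elsewhere (resistance = length).\<close>
definition potential ::
  "('v, 'e) mgraph \<Rightarrow> ('v, 'e) point set \<Rightarrow> ('v, 'e) point \<Rightarrow> ('v, 'e) point \<Rightarrow>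
   (('v, 'e) point \<Rightarrow> real) \<Rightarrow> bool" where
  "potential G A y z f \<longleftrightarrow>
     (\<forall>e\<in>edges G. continuous_on {0..len G e} (\<lambda>s. f (pt G e s))) \<and>
     (\<forall>e\<in>edges G. \<forall>a b. 0 \<le> a \<and> a \<le> b \<and> b \<le> len G e \<and>
         (\<forall>s. a < s \<and> s < b \<longrightarrow> pt G e s \<notin> {y, z} \<union> A) \<longrightarrow>
         (\<exists>\<alpha> \<beta>. \<forall>s\<in>{a..b}. f (pt G e s) = \<alpha> + \<beta> * s)) \<and>
     (\<forall>w\<in>A. \<forall>w'\<in>A. f w = f w') \<and>
     (\<forall>w\<in>points G.
        (\<Sum>w'\<in>cls A w. outslope G f w') =
          (if z \<in> cls A w then 1 else 0) - (if y \<in> cls A w then 1 else 0))"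

text \<open>Voltage at x when unit current enters at y and exits at z, reference voltage 0 at z,
on \<Gamma> with the points of A identified.\<close>
definition voltage ::
  "('v, 'e) mgraph \<Rightarrow> ('v, 'e) point set \<Rightarrow> ('v, 'e) point \<Rightarrow> ('v, 'e) point \<Rightarrow>
   ('v, 'e) point \<Rightarrow> real" where
  "voltage G A z x y = (THE v. \<exists>f. potential G A y z f \<and> f z = 0 \<and> f x = v)"

definition jv :: "('v, 'e) mgraph \<Rightarrow> ('v, 'e) point \<Rightarrow> ('v, 'e) point \<Rightarrow> ('v, 'e) point \<Rightarrow> real" where
  "jv G z x y = voltage G {} z x y"

definition jpq :: "('v, 'e) mgraph \<Rightarrow> ('v, 'e) point \<Rightarrow> ('v, 'e) point \<Rightarrow>
    ('v, 'e) point \<Rightarrow> ('v, 'e) point \<Rightarrow> ('v, 'e) point \<Rightarrow> real" where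
  "jpq G p q z x y = voltage G {p, q} z x y"

definition reff :: "('v, 'e) mgraph \<Rightarrow> ('v, 'e) point \<Rightarrow> ('v, 'e) point \<Rightarrow> real" where
  "reff G x y = jv G y x x"

end

theory Submission
  imports Defs "Jordan_Normal_Form.Determinant"
begin

text \<open>Subdivide every edge at a finite set Q of points containing all vertices and all
points of interest.  Potentials are linear between consecutive points of Q, so they are
determined by their values on Q, and Kirchhoff's law becomes a discrete Laplace equation.  The
Dirichlet form of the resulting resistor network satisfies a discrete Green identity; as it
vanishes only on constants (the graph is connected), the discrete Laplace equation is uniquely
solvable, and interpolating its solutions gives the continuous potentials.  Green's identity
also yields reciprocity of voltages.  For the gluing formula let H be the potential on
\<Gamma>_pq and c the current it sends through the identified point; pairing H with potentials
on \<Gamma> by Green's identity gives j_u(t,s) = j^pq_u(t,s) + c (j_p(q,u) - j_p(q,t)) and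
c r(p,q) = j_p(q,u) - j_p(q,s).\<close>

section \<open>Solving finite linear systems\<close>

lemma linear_combination_sum:
  fixes R :: "('a \<Rightarrow> real) \<Rightarrow> ('a \<Rightarrow> real)"
  assumes lin: "\<And>x y c d. R (\<lambda>v. c * x v + d * y v) w = c * R x w + d * R y w"
    and "finite J"
  shows "R (\<lambda>v. \<Sum>j\<in>J. c j * g j v) w = (\<Sum>j\<in>J. c j * R (g j) w)"
  using \<open>finite J\<close>
proof (induction J rule: finite_induct)
  case empty
  have "R (\<lambda>v. 0 * g undefined v + 0 * g undefined v) w = 0"
    using lin[of 0 "g undefined" 0 "g undefined"] by simp
  then show ?case by simp
next
  case (insert a F)
  have "R (\<lambda>v. \<Sum>j\<in>insert a F. c j * g j v) w = R (\<lambda>v. c a * g a v + 1 * (\<Sum>j\<in>F. c j * g j v)) w"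
    using insert by simp
  also have "\<dots> = c a * R (g a) w + 1 * R (\<lambda>v. \<Sum>j\<in>F. c j * g j v) w" by (rule lin)
  finally show ?case using insert by simp
qed

lemma square_mat_solvable_if_injective:
  fixes M :: "real mat"
  assumes M: "M \<in> carrier_mat n n" and inj: "\<And>v. v \<in> carrier_vec n \<Longrightarrow> M *\<^sub>v v = 0\<^sub>v n \<Longrightarrow> v = 0\<^sub>v n"
    and b: "b \<in> carrier_vec n"
  shows "\<exists>x\<in>carrier_vec n. M *\<^sub>v x = b"
proof -
  have "det M \<noteq> 0" using det_0_iff_vec_prod_zero_field[OF M] inj by blast
  from det_non_zero_imp_unit[OF M this, of "()"]
  obtain B where B: "B \<in> carrier_mat n n" "M * B = 1\<^sub>m n"
    unfolding Units_def ring_mat_def by auto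
  have "M *\<^sub>v (B *\<^sub>v b) = b"
    using assoc_mult_mat_vec[OF M B(1) b, symmetric] B(2) b by simp
  then show ?thesis using B(1) b by (intro bexI[of _ "B *\<^sub>v b"]) auto
qed

lemma linear_system_solvable_if_injective:
  fixes R :: "('a \<Rightarrow> real) \<Rightarrow> ('a \<Rightarrow> real)"
  assumes fin: "finite Q"
    and lin: "\<And>x y c d w. w \<in> Q \<Longrightarrow> R (\<lambda>v. c * x v + d * y v) w = c * R x w + d * R y w"
    and inj: "\<And>x. \<forall>w\<in>Q. R x w = 0 \<Longrightarrow> \<forall>w\<in>Q. x w = 0"
  shows "\<exists>x. \<forall>w\<in>Q. R x w = b w"
proof -
  define n where "n = card Q"
  obtain \<iota> where bij: "bij_betw \<iota> {0..<n} Q" using ex_bij_betw_nat_finite[OF fin] n_def by blast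
  then have \<iota>Q: "i < n \<Longrightarrow> \<iota> i \<in> Q" and onto: "w \<in> Q \<Longrightarrow> \<exists>i<n. w = \<iota> i"
    and \<iota>inj: "i < n \<Longrightarrow> j < n \<Longrightarrow> \<iota> i = \<iota> j \<Longrightarrow> i = j" for i j w
    unfolding bij_betw_def inj_on_def by auto
  define \<delta> where "\<delta> j = (\<lambda>w. if w = \<iota> j then 1 else (0::real))" for j
  define X where "X v = (\<lambda>w. \<Sum>j<n. v $ j * \<delta> j w)" for v :: "real vec"
  define M where "M = mat n n (\<lambda>(i, j). R (\<delta> j) (\<iota> i))"
  have M: "M \<in> carrier_mat n n" unfolding M_def by simp
  have RX: "R (X v) (\<iota> i) = (M *\<^sub>v v) $ i" if "v \<in> carrier_vec n" "i < n" for v i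
  proof -
    have "R (X v) (\<iota> i) = (\<Sum>j<n. v $ j * R (\<delta> j) (\<iota> i))"
      unfolding X_def by (rule linear_combination_sum) (auto intro: lin \<iota>Q that)
    also have "\<dots> = (M *\<^sub>v v) $ i"
      using that M unfolding M_def
      by (auto simp: scalar_prod_def lessThan_atLeast0 mult.commute intro!: sum.cong)
    finally show ?thesis .
  qed
  have X\<iota>: "X v (\<iota> i) = v $ i" if "i < n" for v i
  proof -
    have "X v (\<iota> i) = (\<Sum>j\<in>{i}. v $ j * \<delta> j (\<iota> i))"
      unfolding X_def by (rule sum.mono_neutral_right) (use that \<iota>inj in \<open>auto simp: \<delta>_def\<close>)
    then show ?thesis by (simp add: \<delta>_def)
  qed
  have "v = 0\<^sub>v n" if v: "v \<in> carrier_vec n" "M *\<^sub>v v = 0\<^sub>v n" for v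
  proof -
    have "\<forall>w\<in>Q. R (X v) w = 0" using RX[OF v(1)] v(2) onto by fastforce
    then have "\<forall>w\<in>Q. X v w = 0" by (rule inj)
    then have "v $ i = 0" if "i < n" for i using X\<iota>[OF that, of v] \<iota>Q[OF that] by simp
    then show ?thesis using v(1) by (intro eq_vecI) auto
  qed
  moreover have "vec n (\<lambda>i. b (\<iota> i)) \<in> carrier_vec n" by simp
  ultimately obtain v where v: "v \<in> carrier_vec n" "M *\<^sub>v v = vec n (\<lambda>i. b (\<iota> i))"
    using square_mat_solvable_if_injective[OF M] by blast
  have "R (X v) w = b w" if "w \<in> Q" for w
    using onto[OF that] RX[OF v(1)] v(2) by auto
  then show ?thesis by blast
qed

section \<open>The network of a subdivided metrized graph\<close>

locale subdivision =
  fixes G :: "('v, 'e) mgraph" and Q :: "('v, 'e) point set"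
  assumes metrized: "metrized_graph G" and finite_Q: "finite Q" and Q_points: "Q \<subseteq> points G"
    and verts_in_Q: "Vert ` verts G \<subseteq> Q"
begin

text \<open>The positions on the edge e of the points of Q; consecutive knots bound the
  segments, the resistors of the network.\<close>

definition knots :: "'e \<Rightarrow> real set" where
  "knots e = {0, len G e} \<union> {x. 0 < x \<and> x < len G e \<and> Inner e x \<in> Q}"

definition next_knot :: "'e \<Rightarrow> real \<Rightarrow> real" where
  "next_knot e a = Min {b \<in> knots e. a < b}"

definition prev_knot :: "'e \<Rightarrow> real \<Rightarrow> real" where
  "prev_knot e b = Max {a \<in> knots e. a < b}"

definition edge_val :: "(('v, 'e) point \<Rightarrow> real) \<Rightarrow> 'e \<Rightarrow> real \<Rightarrow> real" where
  "edge_val f e a = f (pt G e a)"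

definition slope :: "(('v, 'e) point \<Rightarrow> real) \<Rightarrow> 'e \<Rightarrow> real \<Rightarrow> real \<Rightarrow> real" where
  "slope f e a b = (edge_val f e b - edge_val f e a) / (b - a)"

text \<open>The Dirichlet form of the interpolations of f and h that are linear on segments.\<close>

definition energy :: "(('v, 'e) point \<Rightarrow> real) \<Rightarrow> (('v, 'e) point \<Rightarrow> real) \<Rightarrow> real" where
  "energy f h = (\<Sum>e\<in>edges G. \<Sum>a\<in>knots e - {len G e}.
     slope f e a (next_knot e a) * (edge_val h e (next_knot e a) - edge_val h e a))"

definition disc_outslope :: "(('v, 'e) point \<Rightarrow> real) \<Rightarrow> ('v, 'e) point \<Rightarrow> real" where
  "disc_outslope f w = (case w of
       Vert v \<Rightarrow> (\<Sum>e\<in>{e\<in>edges G. src G e = v}. slope f e 0 (next_knot e 0))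
               - (\<Sum>e\<in>{e\<in>edges G. tgt G e = v}. slope f e (prev_knot e (len G e)) (len G e))
     | Inner e t \<Rightarrow> slope f e t (next_knot e t) - slope f e (prev_knot e t) t)"

lemma finite_verts: "finite (verts G)"
  and finite_edges: "finite (edges G)"
  and edge_wf: "e \<in> edges G \<Longrightarrow> src G e \<in> verts G \<and> tgt G e \<in> verts G \<and> len G e > 0"
  and verts_connected: "v \<in> verts G \<Longrightarrow> w \<in> verts G \<Longrightarrow> (v, w) \<in> (adj G)\<^sup>*"
  using metrized unfolding metrized_graph_def by auto

lemma Q_cases:
  assumes "w \<in> Q"
  obtains (Vert) v where "w = Vert v" "v \<in> verts G"
    | (Inner) e t where "w = Inner e t" "e \<in> edges G" "t \<in> knots e" "0 < t" "t < len G e"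
proof -
  have "w \<in> points G" using assms Q_points by auto
  then show ?thesis using that assms unfolding points_def knots_def by auto
qed

lemma finite_knots: "finite (knots e)"
proof -
  have "knots e \<subseteq> {0, len G e} \<union> (\<lambda>w. case w of Inner _ x \<Rightarrow> x | Vert _ \<Rightarrow> 0) ` Q"
    unfolding knots_def by (auto intro!: image_eqI)
  then show ?thesis by (rule finite_subset) (use finite_Q in auto)
qed

lemma knot_0: "0 \<in> knots e" and knot_len: "len G e \<in> knots e"
  unfolding knots_def by auto

lemma knot_bounds: "e \<in> edges G \<Longrightarrow> x \<in> knots e \<Longrightarrow> 0 \<le> x \<and> x \<le> len G e"
  using edge_wf[of e] unfolding knots_def by auto

lemma knot_Inner_in_Q: "x \<in> knots e \<Longrightarrow> 0 < x \<Longrightarrow> x < len G e \<Longrightarrow> Inner e x \<in> Q"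
  unfolding knots_def by auto

lemma pt_knot_in_Q:
  assumes "e \<in> edges G" "x \<in> knots e"
  shows "pt G e x \<in> Q"
  using assms knot_bounds[OF assms] edge_wf[OF assms(1)] verts_in_Q knot_Inner_in_Q[of x e]
  unfolding pt_def by auto

lemma next_knot_spec:
  assumes "e \<in> edges G" "a \<in> knots e" "a < len G e"
  shows "next_knot e a \<in> knots e" "a < next_knot e a"
    "\<And>b. b \<in> knots e \<Longrightarrow> a < b \<Longrightarrow> next_knot e a \<le> b"
proof -
  have ne: "{b \<in> knots e. a < b} \<noteq> {}" using knot_len assms by auto
  have fin: "finite {b \<in> knots e. a < b}" using finite_knots by auto
  show "next_knot e a \<in> knots e" "a < next_knot e a"
    using Min_in[OF fin ne] unfolding next_knot_def by auto
  show "\<And>b. b \<in> knots e \<Longrightarrow> a < b \<Longrightarrow> next_knot e a \<le> b"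
    using Min_le[OF fin] unfolding next_knot_def by auto
qed

lemma prev_knot_spec:
  assumes "e \<in> edges G" "b \<in> knots e" "0 < b"
  shows "prev_knot e b \<in> knots e" "prev_knot e b < b"
    "\<And>a. a \<in> knots e \<Longrightarrow> a < b \<Longrightarrow> a \<le> prev_knot e b"
proof -
  have ne: "{a \<in> knots e. a < b} \<noteq> {}" using knot_0 assms by auto
  have fin: "finite {a \<in> knots e. a < b}" using finite_knots by auto
  show "prev_knot e b \<in> knots e" "prev_knot e b < b"
    using Max_in[OF fin ne] unfolding prev_knot_def by auto
  show "\<And>a. a \<in> knots e \<Longrightarrow> a < b \<Longrightarrow> a \<le> prev_knot e b"
    using Max_ge[OF fin] unfolding prev_knot_def by auto
qed

lemma prev_next_knot:
  assumes "e \<in> edges G" "a \<in> knots e" "a < len G e"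
  shows "prev_knot e (next_knot e a) = a"
proof -
  note n = next_knot_spec[OF assms]
  have "0 < next_knot e a" using n(2) knot_bounds[OF assms(1,2)] by auto
  note p = prev_knot_spec[OF assms(1) n(1) this]
  have "a \<le> prev_knot e (next_knot e a)" using p(3)[OF assms(2) n(2)] .
  moreover have "prev_knot e (next_knot e a) \<le> a"
    using n(3)[OF p(1)] p(2) by force
  ultimately show ?thesis by auto
qed

lemma next_prev_knot:
  assumes "e \<in> edges G" "b \<in> knots e" "0 < b"
  shows "next_knot e (prev_knot e b) = b"
proof -
  note p = prev_knot_spec[OF assms]
  have "prev_knot e b < len G e" using p(2) knot_bounds[OF assms(1,2)] by auto
  note n = next_knot_spec[OF assms(1) p(1) this]
  have "next_knot e (prev_knot e b) \<le> b" using n(3)[OF assms(2) p(2)] .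
  moreover have "b \<le> next_knot e (prev_knot e b)"
    using p(3)[OF n(1)] n(2) by force
  ultimately show ?thesis by auto
qed

lemma edge_val_0: "edge_val f e 0 = f (Vert (src G e))"
  unfolding edge_val_def pt_def by simp

lemma edge_val_len: "e \<in> edges G \<Longrightarrow> edge_val f e (len G e) = f (Vert (tgt G e))"
  using edge_wf[of e] unfolding edge_val_def pt_def by simp

lemma edge_val_Inner: "0 < x \<Longrightarrow> x < len G e \<Longrightarrow> edge_val f e x = f (Inner e x)"
  unfolding edge_val_def pt_def by simp

lemma knot_telescope:
  assumes e: "e \<in> edges G" and c: "c \<in> knots e"
  shows "(\<Sum>a\<in>{a\<in>knots e. a < c}. edge_val f e (next_knot e a) - edge_val f e a)
    = edge_val f e c - edge_val f e 0"
proof (cases "c = 0")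
  case True
  have empty: "{a\<in>knots e. a < c} = {}" using knot_bounds[OF e] True by force
  show ?thesis unfolding empty using True by simp
next
  case False
  then have c0: "0 < c" using knot_bounds[OF e c] by simp
  have cl: "c \<le> len G e" using knot_bounds[OF e c] by simp
  have shift: "(\<Sum>a\<in>{a\<in>knots e. a < c}. edge_val f e (next_knot e a))
      = (\<Sum>b\<in>{b\<in>knots e. 0 < b \<and> b \<le> c}. edge_val f e b)"
  proof (rule sum.reindex_bij_witness[of _ "prev_knot e" "next_knot e"])
    fix a assume a: "a \<in> {a\<in>knots e. a < c}"
    then have al: "a < len G e" using cl by auto
    show "prev_knot e (next_knot e a) = a" using prev_next_knot[OF e _ al] a by auto
    show "next_knot e a \<in> {b\<in>knots e. 0 < b \<and> b \<le> c}"
      using next_knot_spec[OF e _ al] a knot_bounds[OF e, of a] c by force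
    show "edge_val f e (next_knot e a) = edge_val f e (next_knot e a)" by simp
  next
    fix b assume b: "b \<in> {b\<in>knots e. 0 < b \<and> b \<le> c}"
    show "next_knot e (prev_knot e b) = b" using next_prev_knot[OF e] b by auto
    show "prev_knot e b \<in> {a\<in>knots e. a < c}" using prev_knot_spec[OF e] b by force
  qed
  have s1: "{b\<in>knots e. 0 < b \<and> b \<le> c} = insert c {b\<in>knots e. 0 < b \<and> b < c}"
    using c c0 by auto
  have s2: "{a\<in>knots e. a < c} = insert 0 {b\<in>knots e. 0 < b \<and> b < c}"
    using knot_0 c0 knot_bounds[OF e] by force
  have "finite {b\<in>knots e. 0 < b \<and> b < c}" using finite_knots by auto
  then show ?thesis unfolding sum_subtractf shift unfolding s1 s2 using c0 by simp
qed

section \<open>Green's identity\<close>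

lemma edge_summation_by_parts:
  assumes e: "e \<in> edges G"
  shows "(\<Sum>a\<in>knots e - {len G e}.
        slope f e a (next_knot e a) * (edge_val h e (next_knot e a) - edge_val h e a))
    = edge_val h e (len G e) * slope f e (prev_knot e (len G e)) (len G e)
      - edge_val h e 0 * slope f e 0 (next_knot e 0)
      - (\<Sum>x\<in>knots e - {0, len G e}.
           edge_val h e x * (slope f e x (next_knot e x) - slope f e (prev_knot e x) x))"
proof -
  have lp: "0 < len G e" using edge_wf[OF e] by auto
  have shift: "(\<Sum>a\<in>knots e - {len G e}. slope f e a (next_knot e a) * edge_val h e (next_knot e a))
        = (\<Sum>b\<in>knots e - {0}. slope f e (prev_knot e b) b * edge_val h e b)"
  proof (rule sum.reindex_bij_witness[of _ "prev_knot e" "next_knot e"])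
    fix b assume b: "b \<in> knots e - {0}"
    then have b0: "0 < b" using knot_bounds[OF e] by force
    show "prev_knot e b \<in> knots e - {len G e}"
      using prev_knot_spec[OF e _ b0] b knot_bounds[OF e, of b] by force
    show "next_knot e (prev_knot e b) = b" using next_prev_knot[OF e _ b0] b by auto
  next
    fix a assume a: "a \<in> knots e - {len G e}"
    then have al: "a < len G e" using knot_bounds[OF e] by force
    show "prev_knot e (next_knot e a) = a" using prev_next_knot[OF e _ al] a by auto
    show "next_knot e a \<in> knots e - {0}"
      using next_knot_spec[OF e _ al] a knot_bounds[OF e, of a] by force
    show "slope f e (prev_knot e (next_knot e a)) (next_knot e a) * edge_val h e (next_knot e a)
        = slope f e a (next_knot e a) * edge_val h e (next_knot e a)"
      using prev_next_knot[OF e _ al] a by auto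
  qed
  have s1: "knots e - {0} = insert (len G e) (knots e - {0, len G e})" using knot_len lp by auto
  have s2: "knots e - {len G e} = insert 0 (knots e - {0, len G e})" using knot_0 lp by auto
  have "(\<Sum>a\<in>knots e - {len G e}.
        slope f e a (next_knot e a) * (edge_val h e (next_knot e a) - edge_val h e a))
     = (\<Sum>b\<in>knots e - {0}. slope f e (prev_knot e b) b * edge_val h e b)
       - (\<Sum>a\<in>knots e - {len G e}. slope f e a (next_knot e a) * edge_val h e a)"
    by (simp add: right_diff_distrib sum_subtractf shift)
  also have "\<dots> = (slope f e (prev_knot e (len G e)) (len G e) * edge_val h e (len G e)
         + (\<Sum>b\<in>knots e - {0, len G e}. slope f e (prev_knot e b) b * edge_val h e b))
       - (slope f e 0 (next_knot e 0) * edge_val h e 0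
         + (\<Sum>a\<in>knots e - {0, len G e}. slope f e a (next_knot e a) * edge_val h e a))"
    unfolding s1 s2 using finite_knots by (subst sum.insert, auto)+
  finally show ?thesis by (simp add: right_diff_distrib sum_subtractf algebra_simps)
qed

lemma Q_Inner_points:
  "Q - Vert ` verts G = (\<lambda>(e, x). Inner e x) ` (SIGMA e:edges G. knots e - {0, len G e})"
proof (rule Set.set_eqI, rule iffI)
  fix w assume w: "w \<in> Q - Vert ` verts G"
  then have "w \<in> points G" using Q_points by auto
  then obtain e x where "w = Inner e x" "e \<in> edges G" "0 < x" "x < len G e"
    using w unfolding points_def by auto
  then show "w \<in> (\<lambda>(e, x). Inner e x) ` (SIGMA e:edges G. knots e - {0, len G e})"
    using w unfolding knots_def by (auto intro!: image_eqI[where x="(e, x)"])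
next
  fix w :: "('v, 'e) point"
  assume "w \<in> (\<lambda>(e, x). Inner e x) ` (SIGMA e:edges G. knots e - {0, len G e})"
  then obtain e x where "w = Inner e x" "e \<in> edges G" "x \<in> knots e" "x \<noteq> 0" "x \<noteq> len G e"
    by auto
  moreover from this have "Inner e x \<in> Q" using knot_Inner_in_Q knot_bounds by force
  ultimately show "w \<in> Q - Vert ` verts G" by auto
qed

lemma sum_verts_by_edges:
  fixes h :: "('v, 'e) point \<Rightarrow> real"
  assumes "\<And>e. e \<in> edges G \<Longrightarrow> end e \<in> verts G"
  shows "(\<Sum>v\<in>verts G. h (Vert v) * (\<Sum>e\<in>{e\<in>edges G. end e = v}. H e))
    = (\<Sum>e\<in>edges G. h (Vert (end e)) * H e)"
proof -
  have "(\<Sum>v\<in>verts G. h (Vert v) * (\<Sum>e\<in>{e\<in>edges G. end e = v}. H e))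
      = (\<Sum>v\<in>verts G. \<Sum>e\<in>{e\<in>edges G. end e = v}. h (Vert (end e)) * H e)"
    unfolding sum_distrib_left by (intro sum.cong refl) auto
  also have "\<dots> = (\<Sum>e\<in>edges G. h (Vert (end e)) * H e)"
    by (rule sum.group) (use finite_edges finite_verts assms in auto)
  finally show ?thesis .
qed

lemma energy_green: "energy f h = - (\<Sum>w\<in>Q. h w * disc_outslope f w)"
proof -
  define F where "F e = slope f e 0 (next_knot e 0)" for e
  define L where "L e = slope f e (prev_knot e (len G e)) (len G e)" for e
  define I where "I e x = slope f e x (next_knot e x) - slope f e (prev_knot e x) x" for e x
  have "energy f h = (\<Sum>e\<in>edges G. h (Vert (tgt G e)) * L e - h (Vert (src G e)) * F e
      - (\<Sum>x\<in>knots e - {0, len G e}. h (Inner e x) * I e x))"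
    unfolding energy_def
  proof (rule sum.cong[OF refl])
    fix e assume e: "e \<in> edges G"
    have "edge_val h e x = h (Inner e x)" if "x \<in> knots e - {0, len G e}" for x
      using that knot_bounds[OF e, of x] by (simp add: edge_val_Inner)
    then show "(\<Sum>a\<in>knots e - {len G e}.
        slope f e a (next_knot e a) * (edge_val h e (next_knot e a) - edge_val h e a))
      = h (Vert (tgt G e)) * L e - h (Vert (src G e)) * F e
        - (\<Sum>x\<in>knots e - {0, len G e}. h (Inner e x) * I e x)"
      unfolding edge_summation_by_parts[OF e] F_def L_def I_def edge_val_0 edge_val_len[OF e]
      by simp
  qed
  also have "\<dots> = (\<Sum>e\<in>edges G. h (Vert (tgt G e)) * L e) - (\<Sum>e\<in>edges G. h (Vert (src G e)) * F e)
      - (\<Sum>e\<in>edges G. \<Sum>x\<in>knots e - {0, len G e}. h (Inner e x) * I e x)"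
    by (simp add: sum_subtractf)
  finally have energy: "energy f h = \<dots>" .
  have inj: "inj_on (\<lambda>(e, x). Inner e x) (SIGMA e:edges G. knots e - {0, len G e})"
    by (auto simp: inj_on_def)
  have "(\<Sum>w\<in>Q - Vert ` verts G. h w * disc_outslope f w)
      = (\<Sum>(e, x)\<in>(SIGMA e:edges G. knots e - {0, len G e}). h (Inner e x) * I e x)"
    unfolding Q_Inner_points sum.reindex[OF inj]
    by (intro sum.cong refl) (auto simp: disc_outslope_def I_def)
  also have "\<dots> = (\<Sum>e\<in>edges G. \<Sum>x\<in>knots e - {0, len G e}. h (Inner e x) * I e x)"
    using finite_edges finite_knots by (subst sum.Sigma) auto
  finally have inner: "(\<Sum>w\<in>Q - Vert ` verts G. h w * disc_outslope f w) = \<dots>" .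
  have "(\<Sum>w\<in>Vert ` verts G. h w * disc_outslope f w) = (\<Sum>v\<in>verts G. h (Vert v) *
      ((\<Sum>e\<in>{e\<in>edges G. src G e = v}. F e) - (\<Sum>e\<in>{e\<in>edges G. tgt G e = v}. L e)))"
    by (subst sum.reindex) (auto simp: inj_on_def disc_outslope_def F_def L_def)
  also have "\<dots> = (\<Sum>e\<in>edges G. h (Vert (src G e)) * F e) - (\<Sum>e\<in>edges G. h (Vert (tgt G e)) * L e)"
    unfolding right_diff_distrib sum_subtractf
    using sum_verts_by_edges[of "src G" h F] sum_verts_by_edges[of "tgt G" h L] edge_wf by simp
  finally have vertices: "(\<Sum>w\<in>Vert ` verts G. h w * disc_outslope f w) = \<dots>" .
  show ?thesis
    using sum.subset_diff[OF verts_in_Q finite_Q, of "\<lambda>w. h w * disc_outslope f w"]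
    unfolding energy inner vertices by simp
qed

lemma energy_sym: "energy f h = energy h f"
  unfolding energy_def slope_def by (intro sum.cong refl) (simp add: field_simps)

lemma energy_diff: "energy (\<lambda>v. f v - h v) k = energy f k - energy h k"
proof -
  have "slope (\<lambda>v. f v - h v) e a b = slope f e a b - slope h e a b" for e a b
    by (simp add: slope_def edge_val_def diff_divide_distrib)
  then show ?thesis unfolding energy_def by (simp add: left_diff_distrib sum_subtractf)
qed

lemma disc_outslope_linear:
  "disc_outslope (\<lambda>v. c * f v + d * h v) w = c * disc_outslope f w + d * disc_outslope h w"
proof -
  have "slope (\<lambda>v. c * f v + d * h v) e a b = c * slope f e a b + d * slope h e a b" for e a b
    by (simp add: slope_def edge_val_def algebra_simps add_divide_distrib diff_divide_distrib)
  then show ?thesis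
    unfolding disc_outslope_def
    by (cases w) (simp_all add: sum.distrib sum_distrib_left algebra_simps sum_subtractf)
qed

lemma disc_outslope_sum_zero: "(\<Sum>w\<in>Q. disc_outslope f w) = 0"
  using energy_green[of f "\<lambda>_. 1"] unfolding energy_def edge_val_def by simp

lemma disc_outslope_cong:
  assumes fh: "\<forall>w\<in>Q. f w = h w" and w: "w \<in> Q"
  shows "disc_outslope f w = disc_outslope h w"
proof -
  have sl: "slope f e a b = slope h e a b" if "e \<in> edges G" "a \<in> knots e" "b \<in> knots e" for e a b
    unfolding slope_def edge_val_def using fh pt_knot_in_Q[OF that(1,2)] pt_knot_in_Q[OF that(1,3)]
    by simp
  show ?thesis using w
  proof (cases rule: Q_cases)
    case (Vert v)
    have "slope f e 0 (next_knot e 0) = slope h e 0 (next_knot e 0)"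
      and "slope f e (prev_knot e (len G e)) (len G e)
        = slope h e (prev_knot e (len G e)) (len G e)"
      if "e \<in> edges G" for e
      using sl[OF that knot_0 next_knot_spec(1)[OF that knot_0]]
        sl[OF that prev_knot_spec(1)[OF that knot_len] knot_len] edge_wf[OF that] by simp_all
    then show ?thesis unfolding Vert disc_outslope_def by simp
  next
    case (Inner e t)
    then show ?thesis unfolding disc_outslope_def
      using sl[OF Inner(2,3) next_knot_spec(1)[OF Inner(2,3,5)]]
        sl[OF Inner(2) prev_knot_spec(1)[OF Inner(2,3,4)] Inner(3)] by simp
  qed
qed

lemma disc_outslope_const:
  assumes "\<forall>w\<in>Q. f w = c" "w \<in> Q"
  shows "disc_outslope f w = 0"
proof -
  have "disc_outslope f w = disc_outslope (\<lambda>_. c) w" using disc_outslope_cong assms by auto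
  also have "\<dots> = 0" unfolding disc_outslope_def slope_def edge_val_def by (cases w) auto
  finally show ?thesis .
qed

lemma energy_self_zero_imp_edge_const:
  assumes zero: "energy f f = 0" and e: "e \<in> edges G" and c: "c \<in> knots e"
  shows "edge_val f e c = edge_val f e 0"
proof -
  define T where "T e a = (edge_val f e (next_knot e a) - edge_val f e a)\<^sup>2 / (next_knot e a - a)"
    for e a
  have gap: "a < next_knot e a" if "e \<in> edges G" "a \<in> knots e - {len G e}" for e a
    using next_knot_spec(2)[OF that(1)] that knot_bounds[OF that(1), of a] by force
  have T_nonneg: "0 \<le> T e a" if "e \<in> edges G" "a \<in> knots e - {len G e}" for e a
    using gap[OF that] unfolding T_def by simp
  have "energy f f = (\<Sum>e\<in>edges G. \<Sum>a\<in>knots e - {len G e}. T e a)"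
    unfolding energy_def slope_def T_def by (simp add: power2_eq_square)
  moreover have "0 \<le> (\<Sum>a\<in>knots e - {len G e}. T e a)" if "e \<in> edges G" for e
    by (intro sum_nonneg T_nonneg[OF that])
  ultimately have "\<forall>e\<in>edges G. (\<Sum>a\<in>knots e - {len G e}. T e a) = 0"
    using zero by (simp add: sum_nonneg_eq_0_iff[OF finite_edges])
  then have "(\<Sum>a\<in>knots e - {len G e}. T e a) = 0"
    using e by blast
  then have T_zero: "T e a = 0" if "a \<in> knots e - {len G e}" for a
    using sum_nonneg_eq_0_iff[of "knots e - {len G e}" "T e"] T_nonneg[OF e] finite_knots that
    by auto
  have step: "edge_val f e (next_knot e a) = edge_val f e a" if "a \<in> knots e - {len G e}" for a
    using T_zero[OF that] gap[OF e that] unfolding T_def by simp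
  have "(\<Sum>a\<in>{a\<in>knots e. a < c}. edge_val f e (next_knot e a) - edge_val f e a) = 0"
    using step knot_bounds[OF e c] by (intro sum.neutral) auto
  then show ?thesis using knot_telescope[OF e c] by simp
qed

lemma energy_self_zero_imp_const:
  assumes zero: "energy f f = 0" and "w \<in> Q" "w' \<in> Q"
  shows "f w = f w'"
proof -
  have ends: "f (Vert (src G e)) = f (Vert (tgt G e))" if e: "e \<in> edges G" for e
    using energy_self_zero_imp_edge_const[OF zero e knot_len] edge_val_len[OF e] edge_val_0 by simp
  have path: "f (Vert v) = f (Vert v')" if "(v, v') \<in> (adj G)\<^sup>*" for v v'
    using that
  proof (induction rule: rtrancl_induct)
    case (step b c)
    then obtain e where "e \<in> edges G" "(b = src G e \<and> c = tgt G e) \<or> (b = tgt G e \<and> c = src G e)"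
      unfolding adj_def by auto
    then show ?case using ends step(3) by auto
  qed simp
  have to_vert: "\<exists>v\<in>verts G. f x = f (Vert v)" if x: "x \<in> Q" for x
    using x
  proof (cases rule: Q_cases)
    case (Inner e t)
    then have "f x = f (Vert (src G e))"
      using energy_self_zero_imp_edge_const[OF zero Inner(2,3)] edge_val_Inner edge_val_0 by simp
    then show ?thesis using edge_wf[OF Inner(2)] by auto
  qed auto
  obtain v v' where v: "v \<in> verts G" "f w = f (Vert v)" "v' \<in> verts G" "f w' = f (Vert v')"
    using to_vert assms(2,3) by meson
  then show ?thesis using path[OF verts_connected[OF v(1,3)]] by simp
qed

section \<open>Discrete potentials\<close>

text \<open>The discrete counterpart of potential G {a1, a2} y z f; the choice a1 = a2 = z
  describes the graph without identifications.\<close>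

definition disc_potential :: "('v, 'e) point \<Rightarrow> ('v, 'e) point \<Rightarrow> ('v, 'e) point \<Rightarrow>
    ('v, 'e) point \<Rightarrow> (('v, 'e) point \<Rightarrow> real) \<Rightarrow> bool" where
  "disc_potential a1 a2 y z f \<longleftrightarrow>
     (\<forall>w\<in>Q - {a1, a2}. disc_outslope f w = of_bool (w = z) - of_bool (w = y)) \<and> f a1 = f a2 \<and>
     (\<Sum>w\<in>{a1, a2}. disc_outslope f w) = of_bool (z \<in> {a1, a2}) - of_bool (y \<in> {a1, a2})"

text \<open>The constant c measures the current that f sends through the identified point.\<close>

lemma energy_disc_potential:
  assumes f: "disc_potential a1 a2 y z f" and Q: "y \<in> Q" "z \<in> Q" "a1 \<in> Q" "a2 \<in> Q"
  obtains c where "\<And>h. energy f h = h y - h z - c * (h a1 - h a2)"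
proof -
  define \<beta> :: "('v, 'e) point \<Rightarrow> real" where "\<beta> w = of_bool (w = z) - of_bool (w = y)" for w
  have "energy f h = h y - h z - (disc_outslope f a1 - \<beta> a1) * (h a1 - h a2)" for h
  proof -
    have "(\<Sum>w\<in>Q. h w * disc_outslope f w)
        = (\<Sum>w\<in>Q. h w * \<beta> w) + (\<Sum>w\<in>Q. h w * (disc_outslope f w - \<beta> w))"
      by (simp add: sum.distrib[symmetric] algebra_simps)
    also have "(\<Sum>w\<in>Q. h w * \<beta> w) = h z - h y"
    proof -
      have "(\<Sum>w\<in>Q. h w * of_bool (w = v)) = h v" if "v \<in> Q" for v
        using finite_Q that by (simp add: of_bool_def if_distrib sum.delta' cong: if_cong)
      then show ?thesis using Q unfolding \<beta>_def right_diff_distrib sum_subtractf by simp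
    qed
    also have "(\<Sum>w\<in>Q. h w * (disc_outslope f w - \<beta> w))
        = (\<Sum>w\<in>{a1, a2}. h w * (disc_outslope f w - \<beta> w))"
      using f finite_Q Q unfolding disc_potential_def \<beta>_def by (intro sum.mono_neutral_right) auto
    also have "\<dots> = (disc_outslope f a1 - \<beta> a1) * (h a1 - h a2)"
    proof (cases "a1 = a2")
      case True
      then show ?thesis using f unfolding disc_potential_def \<beta>_def by simp
    next
      case False
      have "disc_outslope f a1 + disc_outslope f a2 = \<beta> a1 + \<beta> a2"
        using f False unfolding disc_potential_def \<beta>_def by (auto simp: of_bool_def)
      then have "h a2 * (disc_outslope f a1 + disc_outslope f a2) = h a2 * (\<beta> a1 + \<beta> a2)"
        by simp
      then show ?thesis using False by (simp add: algebra_simps)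
    qed
    finally show ?thesis using energy_green[of f h] by simp
  qed
  then show thesis using that by blast
qed

lemma energy_disc_potential_unglued:
  assumes "disc_potential z z y z f" "y \<in> Q" "z \<in> Q"
  shows "energy f h = h y - h z"
proof -
  obtain c where "\<And>h. energy f h = h y - h z - c * (h z - h z)"
    using energy_disc_potential[OF assms(1) assms(2,3,3,3)] by blast
  then show ?thesis by simp
qed

lemma disc_potential_reciprocity:
  assumes "disc_potential z z y z f" "disc_potential z' z' y' z' h"
    and "y \<in> Q" "z \<in> Q" "y' \<in> Q" "z' \<in> Q"
  shows "h y - h z = f y' - f z'"
  using energy_disc_potential_unglued[OF assms(1,3,4), of h]
    energy_disc_potential_unglued[OF assms(2,5,6), of f] energy_sym[of f h] by simp

lemma disc_potential_unique:
  assumes f: "disc_potential a1 a2 y z f" and h: "disc_potential a1 a2 y z h"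
    and Q: "y \<in> Q" "z \<in> Q" "a1 \<in> Q" "a2 \<in> Q" and "f z = h z" and "w \<in> Q"
  shows "f w = h w"
proof -
  define d where "d v = f v - h v" for v
  obtain c where c: "\<And>k. energy f k = k y - k z - c * (k a1 - k a2)"
    using energy_disc_potential[OF f Q] by blast
  obtain c' where c': "\<And>k. energy h k = k y - k z - c' * (k a1 - k a2)"
    using energy_disc_potential[OF h Q] by blast
  have "d a1 = d a2" using f h unfolding disc_potential_def d_def by simp
  then have "energy d d = 0" unfolding d_def energy_diff c c' by simp
  then have "d w = d z" using energy_self_zero_imp_const \<open>w \<in> Q\<close> Q(2) by blast
  then show ?thesis using \<open>f z = h z\<close> unfolding d_def by simp
qed

lemma disc_kirchhoff_at_glue:
  assumes out: "\<forall>w\<in>Q - {a1, a2}. disc_outslope f w = of_bool (w = z) - of_bool (w = y)"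
    and Q: "y \<in> Q" "z \<in> Q" "a1 \<in> Q" "a2 \<in> Q"
  shows "(\<Sum>w\<in>{a1, a2}. disc_outslope f w) = of_bool (z \<in> {a1, a2}) - of_bool (y \<in> {a1, a2})"
proof -
  have "(\<Sum>w\<in>Q. disc_outslope f w)
      = (\<Sum>w\<in>Q - {a1, a2}. disc_outslope f w) + (\<Sum>w\<in>{a1, a2}. disc_outslope f w)"
    using sum.subset_diff[of "{a1, a2}" Q] finite_Q Q by simp
  moreover have "(\<Sum>w\<in>Q - {a1, a2}. disc_outslope f w)
      = (\<Sum>w\<in>Q - {a1, a2}. of_bool (w = z) - of_bool (w = y))"
    using out by (intro sum.cong) auto
  moreover have "(\<Sum>w\<in>Q - {a1, a2}. of_bool (w = z) :: real) = of_bool (z \<notin> {a1, a2})"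
    and "(\<Sum>w\<in>Q - {a1, a2}. of_bool (w = y) :: real) = of_bool (y \<notin> {a1, a2})"
    using finite_Q Q by (simp_all add: of_bool_def sum.delta')
  ultimately have "(\<Sum>w\<in>{a1, a2}. disc_outslope f w)
      = of_bool (y \<notin> {a1, a2}) - of_bool (z \<notin> {a1, a2})"
    using disc_outslope_sum_zero[of f] by (simp add: sum_subtractf)
  then show ?thesis by (simp add: of_bool_def split: if_splits)
qed

lemma disc_potential_exists:
  assumes Q: "y \<in> Q" "z \<in> Q" "a1 \<in> Q" "a2 \<in> Q"
  shows "\<exists>f. disc_potential a1 a2 y z f \<and> f z = 0"
proof -
  txt \<open>By disc_kirchhoff_at_glue, Kirchhoff's law at the identified point may be replaced by
    f a1 = f a2, which makes R f = b a square system.\<close>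
  define R where
    "R f w = (if w = a2 then f z else if w = a1 then f a1 - f a2 else disc_outslope f w)"
    for f :: "('v, 'e) point \<Rightarrow> real" and w
  define b :: "('v, 'e) point \<Rightarrow> real"
    where "b w = (if w \<in> {a1, a2} then 0 else of_bool (w = z) - of_bool (w = y))" for w
  have solution: "disc_potential a1 a2 y' z f \<and> f z = 0"
    if "\<forall>w\<in>Q. R f w = (if w \<in> {a1, a2} then 0 else of_bool (w = z) - of_bool (w = y'))" "y' \<in> Q"
    for f y'
  proof -
    have "f z = 0" "f a1 = f a2" using that Q unfolding R_def by (auto split: if_splits)
    moreover have "\<forall>w\<in>Q - {a1, a2}. disc_outslope f w = of_bool (w = z) - of_bool (w = y')"
      using that unfolding R_def by auto
    ultimately show ?thesis
      using disc_kirchhoff_at_glue \<open>y' \<in> Q\<close> Q unfolding disc_potential_def by blast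
  qed
  have lin: "R (\<lambda>v. c * f v + d * h v) w = c * R f w + d * R h w" for f h c d w
    unfolding R_def by (simp add: disc_outslope_linear algebra_simps)
  have inj: "\<forall>w\<in>Q. f w = 0" if "\<forall>w\<in>Q. R f w = 0" for f
  proof -
    have "disc_potential a1 a2 z z f" "f z = 0" using solution[of f z] that Q by auto
    moreover have "disc_potential a1 a2 z z (\<lambda>_. 0)"
      using disc_outslope_const[of "\<lambda>_. 0" 0] Q unfolding disc_potential_def
      by (cases "a1 = a2") auto
    ultimately show ?thesis using disc_potential_unique[of a1 a2 z z f "\<lambda>_. 0"] Q by auto
  qed
  obtain f where "\<forall>w\<in>Q. R f w = b w"
    using linear_system_solvable_if_injective[OF finite_Q] lin inj by blast
  then show ?thesis using solution[of f y] Q unfolding b_def by blast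
qed

lemma disc_potential_source_ne_sink:
  assumes f: "disc_potential z z y z f" and "y \<in> Q" "z \<in> Q" "y \<noteq> z"
  shows "f y \<noteq> f z"
proof
  assume "f y = f z"
  then have "energy f f = 0" using energy_disc_potential_unglued[OF f \<open>y \<in> Q\<close> \<open>z \<in> Q\<close>] by simp
  then have "\<forall>w\<in>Q. f w = f z" using energy_self_zero_imp_const \<open>z \<in> Q\<close> by blast
  then have "disc_outslope f y = 0" using disc_outslope_const \<open>y \<in> Q\<close> by blast
  moreover have "disc_outslope f y = -1"
    using f \<open>y \<in> Q\<close> \<open>y \<noteq> z\<close> unfolding disc_potential_def by simp
  ultimately show False by simp
qed

end

section \<open>Continuous potentials and their values on Q\<close>

lemma rslope_affine:
  assumes "c \<le> s" "s < d" "d \<le> len G e" "\<forall>r\<in>{c..d}. f (pt G e r) = \<alpha> + \<beta> * r"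
  shows "rslope G f e s = \<beta>"
proof -
  have D: "((\<lambda>r. f (pt G e r)) has_real_derivative \<beta>) (at s within {s..len G e})"
  proof (rule has_field_derivative_transform_within[where d="d - s"])
    show "((\<lambda>r. \<alpha> + \<beta> * r) has_real_derivative \<beta>) (at s within {s..len G e})"
      by (auto intro!: derivative_eq_intros)
    show "0 < d - s" "s \<in> {s..len G e}" using assms by simp_all
    fix r assume "r \<in> {s..len G e}" "dist r s < d - s"
    then show "\<alpha> + \<beta> * r = f (pt G e r)" using assms by (auto simp: dist_real_def)
  qed
  have "at s within {s..len G e} \<noteq> bot"
    using assms at_within_Icc_at_right[of s "len G e"] trivial_limit_at_right_real by simp
  then show ?thesis unfolding rslope_def
    using D has_field_derivative_unique by (intro the_equality) blast+
qed

lemma lslope_affine: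
  assumes "c < s" "s \<le> d" "0 \<le> c" "\<forall>r\<in>{c..d}. f (pt G e r) = \<alpha> + \<beta> * r"
  shows "lslope G f e s = \<beta>"
proof -
  have D: "((\<lambda>r. f (pt G e r)) has_real_derivative \<beta>) (at s within {0..s})"
  proof (rule has_field_derivative_transform_within[where d="s - c"])
    show "((\<lambda>r. \<alpha> + \<beta> * r) has_real_derivative \<beta>) (at s within {0..s})"
      by (auto intro!: derivative_eq_intros)
    show "0 < s - c" "s \<in> {0..s}" using assms by simp_all
    fix r assume "r \<in> {0..s}" "dist r s < s - c"
    then show "\<alpha> + \<beta> * r = f (pt G e r)" using assms by (auto simp: dist_real_def)
  qed
  have "at s within {0..s} \<noteq> bot"
    using assms at_within_Icc_at_left[of 0 s] trivial_limit_at_left_real by simp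
  then show ?thesis unfolding lslope_def
    using D has_field_derivative_unique by (intro the_equality) blast+
qed

context subdivision
begin

definition knotwise_linear :: "(('v, 'e) point \<Rightarrow> real) \<Rightarrow> bool" where
  "knotwise_linear f \<longleftrightarrow> (\<forall>e\<in>edges G. \<forall>a\<in>knots e - {len G e}.
     \<exists>\<alpha> \<beta>. \<forall>s\<in>{a..next_knot e a}. f (pt G e s) = \<alpha> + \<beta> * s)"

lemma slope_affine:
  assumes "\<forall>s\<in>{a..b}. f (pt G e s) = \<alpha> + \<beta> * s" "a < b"
  shows "slope f e a b = \<beta>"
proof -
  have "f (pt G e a) = \<alpha> + \<beta> * a" "f (pt G e b) = \<alpha> + \<beta> * b" using assms by auto
  then show ?thesis using assms(2) unfolding slope_def edge_val_def by (simp add: field_simps)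
qed

lemma rslope_knot:
  assumes f: "knotwise_linear f" and e: "e \<in> edges G" and a: "a \<in> knots e" "a < len G e"
  shows "rslope G f e a = slope f e a (next_knot e a)"
proof -
  note n = next_knot_spec[OF e a]
  obtain \<alpha> \<beta> where ab: "\<forall>s\<in>{a..next_knot e a}. f (pt G e s) = \<alpha> + \<beta> * s"
    using f e a unfolding knotwise_linear_def by force
  have "next_knot e a \<le> len G e" using knot_bounds[OF e n(1)] by simp
  then show ?thesis using rslope_affine[OF _ n(2) _ ab] slope_affine[OF ab n(2)] by simp
qed

lemma lslope_knot:
  assumes f: "knotwise_linear f" and e: "e \<in> edges G" and b: "b \<in> knots e" "0 < b"
  shows "lslope G f e b = slope f e (prev_knot e b) b"
proof -
  note p = prev_knot_spec[OF e b]
  have "prev_knot e b < len G e" using p(2) knot_bounds[OF e b(1)] by simp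
  moreover have "next_knot e (prev_knot e b) = b" using next_prev_knot[OF e b] .
  ultimately obtain \<alpha> \<beta> where ab: "\<forall>s\<in>{prev_knot e b..b}. f (pt G e s) = \<alpha> + \<beta> * s"
    using f e p(1) unfolding knotwise_linear_def by force
  have "0 \<le> prev_knot e b" using knot_bounds[OF e p(1)] by simp
  then show ?thesis using lslope_affine[OF p(2) _ _ ab] slope_affine[OF ab p(2)] by simp
qed

lemma outslope_eq_disc_outslope:
  assumes f: "knotwise_linear f" and w: "w \<in> Q"
  shows "outslope G f w = disc_outslope f w"
  using w
proof (cases rule: Q_cases)
  case (Vert v)
  have "rslope G f e 0 = slope f e 0 (next_knot e 0)"
    and "lslope G f e (len G e) = slope f e (prev_knot e (len G e)) (len G e)"
    if "e \<in> edges G" for e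
    using rslope_knot[OF f that knot_0] lslope_knot[OF f that knot_len] edge_wf[OF that] by simp_all
  then show ?thesis unfolding Vert disc_outslope_def by (simp add: sum_negf)
next
  case (Inner e t)
  then show ?thesis unfolding disc_outslope_def
    using rslope_knot[OF f Inner(2,3)] lslope_knot[OF f Inner(2,3)] by simp
qed

lemma potential_knotwise_linear:
  assumes P: "potential G A y z f" and "{y, z} \<union> A \<subseteq> Q"
  shows "knotwise_linear f"
  unfolding knotwise_linear_def
proof (intro ballI)
  fix e a assume e: "e \<in> edges G" and a: "a \<in> knots e - {len G e}"
  have al: "a < len G e" using a knot_bounds[OF e] by force
  note n = next_knot_spec[OF e _ al]
  have bounds: "0 \<le> a" "a \<le> next_knot e a" "next_knot e a \<le> len G e"
    using knot_bounds[OF e] a n by force+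
  have "pt G e s \<notin> {y, z} \<union> A" if s: "a < s" "s < next_knot e a" for s
  proof -
    have "s \<notin> knots e" using n(3)[of s] a s by force
    then have "Inner e s \<notin> Q" using s bounds unfolding knots_def by auto
    moreover have "pt G e s = Inner e s" using s bounds unfolding pt_def by auto
    ultimately show ?thesis using assms(2) by auto
  qed
  then show "\<exists>\<alpha> \<beta>. \<forall>s\<in>{a..next_knot e a}. f (pt G e s) = \<alpha> + \<beta> * s"
    using P e bounds unfolding potential_def by blast
qed

lemma potential_imp_disc_potential:
  assumes P: "potential G {a1, a2} y z f" and sub: "{y, z, a1, a2} \<subseteq> Q"
  shows "disc_potential a1 a2 y z f"
proof -
  have lin: "knotwise_linear f" using potential_knotwise_linear[OF P] sub by auto
  have Kirchhoff: "(\<Sum>w'\<in>cls {a1, a2} w. outslope G f w')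
      = of_bool (z \<in> cls {a1, a2} w) - of_bool (y \<in> cls {a1, a2} w)" if "w \<in> Q" for w
    using P that Q_points unfolding potential_def of_bool_def by blast
  have "disc_outslope f w = of_bool (w = z) - of_bool (w = y)" if "w \<in> Q - {a1, a2}" for w
    using Kirchhoff[of w] outslope_eq_disc_outslope[OF lin, of w] that unfolding cls_def by auto
  moreover have "f a1 = f a2" using P unfolding potential_def by blast
  moreover have "(\<Sum>w\<in>{a1, a2}. outslope G f w) = (\<Sum>w\<in>{a1, a2}. disc_outslope f w)"
    using outslope_eq_disc_outslope[OF lin] sub by (intro sum.cong) auto
  then have "(\<Sum>w\<in>{a1, a2}. disc_outslope f w) = of_bool (z \<in> {a1, a2}) - of_bool (y \<in> {a1, a2})"
    using Kirchhoff[of a1] sub unfolding cls_def by simp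
  ultimately show ?thesis unfolding disc_potential_def by blast
qed

text \<open>The piecewise linear interpolation of the values of f on Q, written as a sum so that
  continuity is evident.\<close>

definition interp_on_edge :: "(('v, 'e) point \<Rightarrow> real) \<Rightarrow> 'e \<Rightarrow> real \<Rightarrow> real" where
  "interp_on_edge f e s = f (Vert (src G e)) + (\<Sum>a\<in>knots e - {len G e}.
     slope f e a (next_knot e a) * (max a (min s (next_knot e a)) - a))"

definition interp :: "(('v, 'e) point \<Rightarrow> real) \<Rightarrow> ('v, 'e) point \<Rightarrow> real" where
  "interp f w = (case w of Vert v \<Rightarrow> f (Vert v) | Inner e s \<Rightarrow> interp_on_edge f e s)"

lemma knot_segment_max:
  assumes e: "e \<in> edges G" and s: "0 \<le> s" "s < len G e"
  defines "c \<equiv> Max {a \<in> knots e. a \<le> s}"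
  shows "c \<in> knots e" "c \<le> s" "c < len G e" "s < next_knot e c"
proof -
  have fin: "finite {a \<in> knots e. a \<le> s}" using finite_knots by auto
  have ne: "{a \<in> knots e. a \<le> s} \<noteq> {}" using knot_0 s by auto
  show cS: "c \<in> knots e" and cs: "c \<le> s" using Max_in[OF fin ne] unfolding c_def by auto
  show cl: "c < len G e" using cs s by simp
  show "s < next_knot e c"
  proof (rule ccontr)
    assume "\<not> s < next_knot e c"
    then have "next_knot e c \<in> {a \<in> knots e. a \<le> s}" using next_knot_spec(1)[OF e cS cl] by auto
    then have "next_knot e c \<le> c" using Max_ge[OF fin] unfolding c_def by auto
    then show False using next_knot_spec(2)[OF e cS cl] by simp
  qed
qed

lemma knot_segment_exists:
  assumes e: "e \<in> edges G" and s: "0 \<le> s" "s \<le> len G e"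
  shows "\<exists>c\<in>knots e. c < len G e \<and> c \<le> s \<and> s \<le> next_knot e c"
proof (cases "s = len G e")
  case True
  have "0 < len G e" using edge_wf[OF e] by simp
  then show ?thesis
    using prev_knot_spec(1,2)[OF e knot_len] next_prev_knot[OF e knot_len] True
    by (intro bexI[of _ "prev_knot e (len G e)"]) auto
next
  case False
  then show ?thesis using knot_segment_max[OF e s(1)] s by (meson le_less)
qed

lemma interp_on_edge_segment:
  assumes e: "e \<in> edges G" and c: "c \<in> knots e" "c < len G e"
    and s: "c \<le> s" "s \<le> next_knot e c"
  shows "interp_on_edge f e s = edge_val f e c + slope f e c (next_knot e c) * (s - c)"
proof -
  define \<sigma> where "\<sigma> a = slope f e a (next_knot e a)" for a
  have summand: "\<sigma> a * (max a (min s (next_knot e a)) - a)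
      = (if a < c then edge_val f e (next_knot e a) - edge_val f e a else 0)
        + (if a = c then \<sigma> c * (s - c) else 0)" if a: "a \<in> knots e - {len G e}" for a
  proof -
    have "a < len G e" using a knot_bounds[OF e] by force
    note a_next = next_knot_spec[OF e _ this]
    consider "a < c" | "a = c" | "c < a" by linarith
    then show ?thesis
    proof cases
      case 1
      then have "next_knot e a \<le> c" using a_next(3)[of c] a c by auto
      then show ?thesis using 1 a_next(2) a s unfolding \<sigma>_def slope_def by auto
    next
      case 2
      then show ?thesis using s by auto
    next
      case 3
      then have "next_knot e c \<le> a" using next_knot_spec(3)[OF e c] a by auto
      then show ?thesis using 3 s by auto
    qed
  qed
  have "(\<Sum>a\<in>knots e - {len G e}. if a < c then edge_val f e (next_knot e a) - edge_val f e a else 0)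
      = (\<Sum>a\<in>{a\<in>knots e - {len G e}. a < c}. edge_val f e (next_knot e a) - edge_val f e a)"
    by (rule sum.inter_filter[symmetric]) (simp add: finite_knots)
  also have "{a\<in>knots e - {len G e}. a < c} = {a\<in>knots e. a < c}" using c by auto
  finally have "(\<Sum>a\<in>knots e - {len G e}.
      if a < c then edge_val f e (next_knot e a) - edge_val f e a else 0)
      = edge_val f e c - edge_val f e 0"
    using knot_telescope[OF e c(1)] by simp
  moreover have "(\<Sum>a\<in>knots e - {len G e}. if a = c then \<sigma> c * (s - c) else 0) = \<sigma> c * (s - c)"
    using finite_knots c by (simp add: sum.delta')
  ultimately show ?thesis
    unfolding interp_on_edge_def \<sigma>_def[symmetric] using summand
    by (simp add: sum.distrib edge_val_0)
qed

lemma interp_pt: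
  assumes e: "e \<in> edges G" and s: "0 \<le> s" "s \<le> len G e"
  shows "interp f (pt G e s) = interp_on_edge f e s"
proof -
  have l0: "0 < len G e" using edge_wf[OF e] by simp
  consider "s = 0" | "s = len G e" | "0 < s" "s < len G e" using s by linarith
  then show ?thesis
  proof cases
    case 1
    have "interp_on_edge f e 0 = edge_val f e 0"
      using interp_on_edge_segment[OF e knot_0 l0, of 0] next_knot_spec(2)[OF e knot_0 l0] by simp
    then show ?thesis using 1 edge_val_0 unfolding interp_def pt_def by simp
  next
    case 2
    define a where "a = prev_knot e (len G e)"
    have a: "a \<in> knots e" "a < len G e" "next_knot e a = len G e"
      using prev_knot_spec[OF e knot_len l0] next_prev_knot[OF e knot_len l0]
      unfolding a_def by auto
    have "interp_on_edge f e (len G e) = edge_val f e a + slope f e a (len G e) * (len G e - a)"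
      using interp_on_edge_segment[OF e a(1,2), of "len G e"] a by simp
    also have "\<dots> = edge_val f e (len G e)" using a(2) unfolding slope_def by simp
    finally show ?thesis using 2 edge_val_len[OF e] l0 unfolding interp_def pt_def by simp
  next
    case 3
    then show ?thesis unfolding interp_def pt_def by simp
  qed
qed

lemma interp_eq_on_Q:
  assumes "w \<in> Q"
  shows "interp f w = f w"
  using assms
proof (cases rule: Q_cases)
  case (Vert v)
  then show ?thesis unfolding interp_def by simp
next
  case (Inner e t)
  have "interp_on_edge f e t = edge_val f e t"
    using interp_on_edge_segment[OF Inner(2,3,5), of t] next_knot_spec(2)[OF Inner(2,3,5)] by simp
  then show ?thesis using Inner edge_val_Inner[of t e f] unfolding interp_def by simp
qed

lemma interp_segment:
  assumes e: "e \<in> edges G" and c: "c \<in> knots e" "c < len G e"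
    and s: "c \<le> s" "s \<le> next_knot e c"
  shows "interp f (pt G e s)
    = (edge_val f e c - slope f e c (next_knot e c) * c) + slope f e c (next_knot e c) * s"
proof -
  have "0 \<le> c" "next_knot e c \<le> len G e"
    using knot_bounds[OF e c(1)] knot_bounds[OF e next_knot_spec(1)[OF e c]] by auto
  then show ?thesis
    using interp_pt[OF e] interp_on_edge_segment[OF e c s] s by (simp add: algebra_simps)
qed

lemma knotwise_linear_interp: "knotwise_linear (interp f)"
  unfolding knotwise_linear_def
proof (intro ballI)
  fix e a assume e: "e \<in> edges G" and a: "a \<in> knots e - {len G e}"
  then have "a \<in> knots e" "a < len G e" using knot_bounds[OF e] by force+
  then show "\<exists>\<alpha> \<beta>. \<forall>s\<in>{a..next_knot e a}. interp f (pt G e s) = \<alpha> + \<beta> * s"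
    using interp_segment[OF e] by (intro exI ballI) auto
qed

lemma continuous_on_interp:
  assumes e: "e \<in> edges G"
  shows "continuous_on {0..len G e} (\<lambda>s. interp f (pt G e s))"
proof -
  have "continuous_on {0..len G e} (interp_on_edge f e)"
    unfolding interp_on_edge_def by (intro continuous_intros)
  then show ?thesis by (rule continuous_on_cong[THEN iffD1, rotated 2]) (auto simp: interp_pt[OF e])
qed

lemma outslope_interp:
  assumes "w \<in> Q"
  shows "outslope G (interp f) w = disc_outslope f w"
  using outslope_eq_disc_outslope[OF knotwise_linear_interp assms]
    disc_outslope_cong[OF _ assms, of "interp f" f] interp_eq_on_Q by simp

lemma outslope_interp_off_Q:
  assumes "w \<in> points G" "w \<notin> Q"
  shows "outslope G (interp f) w = 0"
proof -
  obtain e r where w: "w = Inner e r" "e \<in> edges G" "0 < r" "r < len G e"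
    using assms verts_in_Q unfolding points_def by auto
  have "r \<notin> knots e" using assms w unfolding knots_def by auto
  define c where "c = Max {a \<in> knots e. a \<le> r}"
  note c = knot_segment_max[OF w(2) w(3)[THEN less_imp_le] w(4), folded c_def]
  have "c < r" using c \<open>r \<notin> knots e\<close> by (cases "c = r") auto
  have "next_knot e c \<le> len G e" "0 \<le> c"
    using knot_bounds[OF w(2) next_knot_spec(1)[OF w(2) c(1,3)]] knot_bounds[OF w(2) c(1)]
    by simp_all
  moreover have "\<forall>s\<in>{c..next_knot e c}. interp f (pt G e s)
      = (edge_val f e c - slope f e c (next_knot e c) * c) + slope f e c (next_knot e c) * s"
    using interp_segment[OF w(2) c(1,3)] by auto
  ultimately have "rslope G (interp f) e r = slope f e c (next_knot e c)"
    and "lslope G (interp f) e r = slope f e c (next_knot e c)"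
    using rslope_affine[OF less_imp_le[OF \<open>c < r\<close>] c(4)]
      lslope_affine[OF \<open>c < r\<close> less_imp_le[OF c(4)]] by auto
  then show ?thesis unfolding w by simp
qed

lemma interp_affine_between_breaks:
  assumes Q: "Q \<subseteq> Vert ` verts G \<union> B" and e: "e \<in> edges G"
    and ab: "0 \<le> a" "a \<le> b" "b \<le> len G e" and no_break: "\<forall>s. a < s \<and> s < b \<longrightarrow> pt G e s \<notin> B"
  shows "\<exists>\<alpha> \<beta>. \<forall>s\<in>{a..b}. interp f (pt G e s) = \<alpha> + \<beta> * s"
proof (cases "a = b")
  case True
  show ?thesis by (rule exI[of _ "interp f (pt G e a)"], rule exI[of _ 0]) (use True in auto)
next
  case False
  have no_knot: "False" if r: "a < r" "r < b" "r \<in> knots e" for r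
  proof -
    have "0 < r" "r < len G e" using r ab by auto
    then have "pt G e r = Inner e r" "Inner e r \<in> Q"
      using knot_Inner_in_Q[OF r(3)] unfolding pt_def by auto
    then have "pt G e r \<in> B" using Q by auto
    then show False using no_break r by auto
  qed
  define m where "m = (a + b) / 2"
  have m: "a < m" "m < b" "0 \<le> m" "m \<le> len G e" using ab False unfolding m_def by auto
  obtain c where c: "c \<in> knots e" "c < len G e" "c \<le> m" "m \<le> next_knot e c"
    using knot_segment_exists[OF e m(3,4)] by blast
  have "c \<le> a" using no_knot[of c] c m by force
  moreover have "b \<le> next_knot e c"
    using no_knot[of "next_knot e c"] next_knot_spec(1)[OF e c(1,2)] c m by force
  ultimately show ?thesis using interp_segment[OF e c(1,2)] by (intro exI ballI) auto
qed

text \<open>The interpolation may break at every point of Q, whereas a potential may only break at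
  y, z, a1 and a2; hence Q must not contain other inner points.\<close>

lemma interp_potential:
  assumes Q: "Q = Vert ` verts G \<union> {y, z, a1, a2}" and f: "disc_potential a1 a2 y z f"
  shows "potential G {a1, a2} y z (interp f)"
proof -
  have Q_breaks: "Q \<subseteq> Vert ` verts G \<union> ({y, z} \<union> {a1, a2})" using Q by auto
  have Kirchhoff: "(\<Sum>w'\<in>cls {a1, a2} w. outslope G (interp f) w')
      = of_bool (z \<in> cls {a1, a2} w) - of_bool (y \<in> cls {a1, a2} w)" if "w \<in> points G" for w
  proof (cases "w \<in> Q")
    case True
    show ?thesis
    proof (cases "w \<in> {a1, a2}")
      case True
      have "(\<Sum>w'\<in>{a1, a2}. outslope G (interp f) w') = (\<Sum>w'\<in>{a1, a2}. disc_outslope f w')"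
        using outslope_interp Q by (intro sum.cong) auto
      then show ?thesis using True f unfolding cls_def disc_potential_def by simp
    next
      case False
      then show ?thesis using f outslope_interp[OF \<open>w \<in> Q\<close>] \<open>w \<in> Q\<close>
        unfolding cls_def disc_potential_def by auto
    qed
  next
    case False
    then show ?thesis using outslope_interp_off_Q[OF that] Q unfolding cls_def by auto
  qed
  moreover have "interp f a1 = interp f a2"
    using f Q interp_eq_on_Q unfolding disc_potential_def by auto
  moreover have "\<exists>\<alpha> \<beta>. \<forall>s\<in>{a..b}. interp f (pt G e s) = \<alpha> + \<beta> * s"
    if "e \<in> edges G" "0 \<le> a" "a \<le> b" "b \<le> len G e"
      "\<forall>s. a < s \<and> s < b \<longrightarrow> pt G e s \<notin> {y, z} \<union> {a1, a2}" for e a b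
    using interp_affine_between_breaks[of "{y, z} \<union> {a1, a2}"] that Q_breaks by blast
  ultimately show ?thesis
    unfolding potential_def of_bool_def using continuous_on_interp by auto
qed

end

lemma subdivisionI:
  assumes "metrized_graph G" "B \<subseteq> points G" "finite B"
  shows "subdivision G (Vert ` verts G \<union> B)"
  using assms unfolding subdivision_def metrized_graph_def points_def by auto

lemma potential_glue_sink:
  fixes G :: "('v, 'e) mgraph" and y z :: "('v, 'e) point"
  shows "potential G {z} y z f = potential G {} y z f"
proof -
  have "cls {z} w = cls {} w" for w :: "('v, 'e) point" unfolding cls_def by auto
  moreover have "{y, z} \<union> {z} = {y, z} \<union> {}" by auto
  ultimately show ?thesis unfolding potential_def by simp
qed

lemma potential_exists:
  assumes "metrized_graph G" and "{y, z, a1, a2} \<subseteq> points G"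
  shows "\<exists>f. potential G {a1, a2} y z f \<and> f z = 0"
proof -
  let ?Q = "Vert ` verts G \<union> {y, z, a1, a2}"
  interpret subdivision G ?Q by (rule subdivisionI) (use assms in auto)
  obtain f where f: "disc_potential a1 a2 y z f" "f z = 0"
    using disc_potential_exists[of y z a1 a2] by auto
  have "potential G {a1, a2} y z (interp f)" using interp_potential[OF refl f(1)] .
  moreover have "interp f z = 0" using interp_eq_on_Q[of z f] f(2) by simp
  ultimately show ?thesis by blast
qed

context subdivision
begin

lemma voltage_eq_disc_potential:
  assumes f: "disc_potential a1 a2 y z f" "f z = 0"
    and Q: "x \<in> Q" "y \<in> Q" "z \<in> Q" "a1 \<in> Q" "a2 \<in> Q"
  shows "voltage G {a1, a2} z x y = f x"
proof -
  have agree: "h x = f x" if "potential G {a1, a2} y z h" "h z = 0" for h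
    using disc_potential_unique[OF potential_imp_disc_potential[OF that(1)] f(1)] that(2) f(2) Q
    by auto
  obtain h where "potential G {a1, a2} y z h" "h z = 0"
    using potential_exists[OF metrized] Q Q_points by blast
  then show ?thesis unfolding voltage_def using agree by (intro the_equality) blast+
qed

lemma jv_eq_disc_potential:
  assumes "disc_potential z z y z f" "f z = 0" "x \<in> Q" "y \<in> Q" "z \<in> Q"
  shows "jv G z x y = f x"
proof -
  have "jv G z x y = voltage G {z, z} z x y"
    unfolding jv_def voltage_def using potential_glue_sink[of G z y] by simp
  then show ?thesis using voltage_eq_disc_potential[OF assms(1,2) assms(3-5,5,5)] by simp
qed

lemma jv_sym:
  assumes "x \<in> Q" "y \<in> Q" "z \<in> Q"
  shows "jv G z x y = jv G z y x"
proof -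
  obtain f where f: "disc_potential z z x z f" "f z = 0"
    using disc_potential_exists[of x z z z] assms by auto
  obtain h where h: "disc_potential z z y z h" "h z = 0"
    using disc_potential_exists[of y z z z] assms by auto
  have "h x = f y" using disc_potential_reciprocity[OF f(1) h(1)] assms f(2) h(2) by simp
  then show ?thesis using jv_eq_disc_potential[OF h] jv_eq_disc_potential[OF f] assms by simp
qed

lemma reff_eq_disc_potential:
  assumes f: "disc_potential z z y z f" "f z = 0" and "y \<in> Q" "z \<in> Q"
  shows "reff G z y = f y"
proof -
  obtain R where R: "disc_potential y y z y R" "R y = 0"
    using disc_potential_exists[of z y y y] assms by auto
  have "R z = f y" using disc_potential_reciprocity[OF f(1) R(1)] assms R(2) by simp
  then show ?thesis unfolding reff_def using jv_eq_disc_potential[OF R] assms by simp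
qed

lemma disc_potential_glue_formula:
  assumes Q: "p \<in> Q" "q \<in> Q" "s \<in> Q" "t \<in> Q" "u \<in> Q" and "p \<noteq> q"
    and F: "disc_potential u u s u F" "F u = 0"
    and H: "disc_potential p q s u H" "H u = 0"
    and \<rho>: "disc_potential p p q p \<rho>" "\<rho> p = 0"
  shows "F t = H t + (\<rho> u - \<rho> t) * (\<rho> u - \<rho> s) / \<rho> q"
proof -
  obtain T where T: "disc_potential u u t u T" "T u = 0"
    using disc_potential_exists[of t u u u] Q by auto
  obtain c where c: "\<And>h. energy H h = h s - h u - c * (h p - h q)"
    using energy_disc_potential[OF H(1)] Q by blast
  have "F t = T s" using disc_potential_reciprocity[OF T(1) F(1)] Q F(2) T(2) by simp
  moreover have "H t = T s - c * (T p - T q)"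
    using c[of T] energy_disc_potential_unglued[OF T(1), of H] energy_sym[of T H] Q H(2) T(2)
    by simp
  moreover have "T p - T q = \<rho> u - \<rho> t" using disc_potential_reciprocity[OF \<rho>(1) T(1)] Q by simp
  ultimately have F_t: "F t = H t + c * (\<rho> u - \<rho> t)" by simp
  have "c * \<rho> q = \<rho> u - \<rho> s"
    using c[of \<rho>] energy_disc_potential_unglued[OF \<rho>(1), of H] energy_sym[of \<rho> H] H(1) \<rho>(2) Q
    unfolding disc_potential_def by simp
  moreover have "\<rho> q \<noteq> 0"
    using disc_potential_source_ne_sink[OF \<rho>(1)] Q \<open>p \<noteq> q\<close> \<rho>(2) by auto
  ultimately have "c = (\<rho> u - \<rho> s) / \<rho> q" by (simp add: eq_divide_eq)
  then show ?thesis using F_t by (simp add: mult.commute)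
qed

end

theorem theorem2p7:
  fixes G :: "('v, 'e) mgraph" and p q s t u :: "('v, 'e) point"
  assumes "metrized_graph G"
    and "p \<in> points G" "q \<in> points G" "s \<in> points G" "t \<in> points G" "u \<in> points G"
    and "p \<noteq> q"
  shows "jv G u t s = jpq G p q u t s +
           ((jv G p q t - jv G p q u)\<^sup>2 + (jv G p q s - jv G p q u)\<^sup>2
              - (jv G p q t - jv G p q s)\<^sup>2) / (2 * reff G p q)
       \<and> jpq G p q u t s +
           ((jv G p q t - jv G p q u)\<^sup>2 + (jv G p q s - jv G p q u)\<^sup>2
              - (jv G p q t - jv G p q s)\<^sup>2) / (2 * reff G p q)
         = jpq G p q u t s + (1 / reff G p q) * (jv G p q u - jv G p q t) * (jv G p q u - jv G p q s)"
proof -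
  let ?Q = "Vert ` verts G \<union> {p, q, s, t, u}"
  interpret subdivision G ?Q by (rule subdivisionI) (use assms in auto)
  have Q: "p \<in> ?Q" "q \<in> ?Q" "s \<in> ?Q" "t \<in> ?Q" "u \<in> ?Q" by auto
  obtain F where F: "disc_potential u u s u F" "F u = 0"
    using disc_potential_exists[of s u u u] Q by auto
  obtain H where H: "disc_potential p q s u H" "H u = 0"
    using disc_potential_exists[of s u p q] Q by auto
  obtain \<rho> where \<rho>: "disc_potential p p q p \<rho>" "\<rho> p = 0"
    using disc_potential_exists[of q p p p] Q by auto
  have "jv G u t s = F t" using jv_eq_disc_potential[OF F] Q by simp
  moreover have "jpq G p q u t s = H t"
    unfolding jpq_def using voltage_eq_disc_potential[OF H] Q by simp
  moreover have "jv G p q w = \<rho> w" if "w \<in> ?Q" for w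
    using jv_sym[of q w p] jv_eq_disc_potential[OF \<rho>] that Q by simp
  moreover have "reff G p q = \<rho> q" using reff_eq_disc_potential[OF \<rho>] Q by simp
  moreover have "F t = H t + (\<rho> u - \<rho> t) * (\<rho> u - \<rho> s) / \<rho> q"
    using disc_potential_glue_formula[OF Q assms(7) F H \<rho>] .
  moreover have "(a - c)\<^sup>2 + (b - c)\<^sup>2 - (a - b)\<^sup>2 = 2 * ((c - a) * (c - b))" for a b c :: real
    by (simp add: power2_eq_square algebra_simps)
  ultimately show ?thesis using Q by simp
qed

end
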